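(* Let $x,y$ be vertices of the Farey graph $\mathcal{F}$ with $d_{\mathcal{C}}(x,y)\ge 2$, and let $\mathcal{P}$ be a path in $\mathcal{F}$ joining $x$ and $y$. Then $\mathcal{P}$ is a geodesic in $\mathcal{F}$ if and only if $\mathcal{P}$ is contained in the ladder $\mathcal{L}(x,y)$ and is a geodesic in the graph $\mathcal{L}(x,y)$.
   Context: The Farey graph $\mathcal{F}$ has vertex set $\mathbb{Q}\cup\{\infty\}$ (vertices $p/q$ in lowest terms, $\infty=1/0$), with $p/q$ and $r/s$ adjacent iff $|ps-qr|=1$; $d_{\mathcal{C}}$ is its path metric with unit edge lengths. It is embedded in $\overline{\mathbb{H}}=\mathbb{H}^2\cup\partial\mathbb{H}^2$ (upper half-plane model) with edges realized as hyperbolic geodesics; the closures of the complementary regions are ideal triangles called Farey triangles. For distinct $x,y\in\partial\mathbb{H}^2$, the ladder $\mathcal{L}(x,y)$ is the union of all Farey triangles whose interior meets the hyperbolic geodesic from $x$ to $y$, regarded as the subgraph of $\mathcal{F}$ formed by the vertices and edges of these triangles (with its own path metric). *)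

theory Defs
  imports Complex_Main "HOL-Library.Extended_Nat"
begin

text \<open>A vertex of the Farey graph is an element of Q \<union> {\<infinity>}, modelled as
  rat option: Some a is the rational a, None is \<infinity> = 1/0.
  The reduced fraction of a vertex (with positive denominator):\<close>

definition frac :: "rat option \<Rightarrow> int \<times> int" where
  "frac v = (case v of None \<Rightarrow> (1, 0) | Some a \<Rightarrow> quotient_of a)"

definition farey_adj :: "rat option \<Rightarrow> rat option \<Rightarrow> bool" where
  "farey_adj u v = (let (p, q) = frac u; (r, s) = frac v in \<bar>p * s - q * r\<bar> = 1)"

definition is_path :: "('a \<Rightarrow> 'a \<Rightarrow> bool) \<Rightarrow> 'a list \<Rightarrow> 'a \<Rightarrow> 'a \<Rightarrow> bool" where
  "is_path E P x y = (P \<noteq> [] \<and> hd P = x \<and> last P = y \<and>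
      (\<forall>i. Suc i < length P \<longrightarrow> E (P ! i) (P ! Suc i)))"

text \<open>Path metric with unit edge lengths (\<infinity> if no path exists).\<close>
definition gdist :: "('a \<Rightarrow> 'a \<Rightarrow> bool) \<Rightarrow> 'a \<Rightarrow> 'a \<Rightarrow> enat" where
  "gdist E x y = (INF P \<in> {P. is_path E P x y}. enat (length P - 1))"

definition is_geodesic :: "('a \<Rightarrow> 'a \<Rightarrow> bool) \<Rightarrow> 'a list \<Rightarrow> 'a \<Rightarrow> 'a \<Rightarrow> bool" where
  "is_geodesic E P x y = (is_path E P x y \<and> enat (length P - 1) = gdist E x y)"

abbreviation farey_dist :: "rat option \<Rightarrow> rat option \<Rightarrow> enat" where
  "farey_dist \<equiv> gdist farey_adj"

text \<open>Boundary points of H^2: real option (None = \<infinity>).\<close>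

definition bdry :: "rat option \<Rightarrow> real option" where
  "bdry v = map_option real_of_rat v"

definition hgeod :: "real option \<Rightarrow> real option \<Rightarrow> complex set" where
  "hgeod u v = (case (u, v) of
      (Some a, Some b) \<Rightarrow> {z. Im z > 0 \<and> cmod (z - complex_of_real ((a + b) / 2)) = \<bar>a - b\<bar> / 2}
    | (Some a, None) \<Rightarrow> {z. Im z > 0 \<and> Re z = a}
    | (None, Some b) \<Rightarrow> {z. Im z > 0 \<and> Re z = b}
    | (None, None) \<Rightarrow> {})"

text \<open>Signed side of a point z of H^2 with respect to the geodesic from u to v:
  the geodesic is the zero set, its two complementary half-planes are where the
  value is positive resp. negative.\<close>
definition side_pt :: "real option \<Rightarrow> real option \<Rightarrow> complex \<Rightarrow> real" where
  "side_pt u v z = (case (u, v) of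
      (Some a, Some b) \<Rightarrow> (cmod (z - complex_of_real ((a + b) / 2)))\<^sup>2 - ((a - b) / 2)\<^sup>2
    | (Some a, None) \<Rightarrow> Re z - a
    | (None, Some b) \<Rightarrow> Re z - b
    | (None, None) \<Rightarrow> 0)"

text \<open>The corresponding side of a boundary point w (its limiting value, up to sign).\<close>
definition side_bd :: "real option \<Rightarrow> real option \<Rightarrow> real option \<Rightarrow> real" where
  "side_bd u v w = (case (u, v, w) of
      (Some a, Some b, Some c) \<Rightarrow> (c - a) * (c - b)
    | (Some a, Some b, None) \<Rightarrow> 1
    | (Some a, None, Some c) \<Rightarrow> c - a
    | (None, Some b, Some c) \<Rightarrow> c - b
    | _ \<Rightarrow> 0)"

text \<open>Interior of the ideal triangle with ideal vertices a, b, c: intersection of the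
  three open half-planes bounded by the sides and containing the opposite vertex.\<close>
definition tri_interior :: "real option \<Rightarrow> real option \<Rightarrow> real option \<Rightarrow> complex set" where
  "tri_interior a b c = {z. Im z > 0 \<and>
      side_pt a b z * side_bd a b c > 0 \<and>
      side_pt b c z * side_bd b c a > 0 \<and>
      side_pt c a z * side_bd c a b > 0}"

text \<open>Farey triangles: ideal triangles spanned by three pairwise Farey-adjacent vertices
  (these are exactly the closures of the complementary regions of the Farey graph).\<close>
definition farey_triangle :: "rat option \<Rightarrow> rat option \<Rightarrow> rat option \<Rightarrow> bool" where
  "farey_triangle a b c = (farey_adj a b \<and> farey_adj b c \<and> farey_adj c a)"

text \<open>Farey triangles in the ladder L(x,y): those whose interior meets the geodesic from x to y.\<close>
definition ladder_tri :: "rat option \<Rightarrow> rat option \<Rightarrow> rat option \<Rightarrow> rat option \<Rightarrow> rat option \<Rightarrow> bool" where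
  "ladder_tri x y a b c = (farey_triangle a b c \<and>
      tri_interior (bdry a) (bdry b) (bdry c) \<inter> hgeod (bdry x) (bdry y) \<noteq> {})"

definition ladder_vertices :: "rat option \<Rightarrow> rat option \<Rightarrow> rat option set" where
  "ladder_vertices x y = {v. \<exists>a b c. ladder_tri x y a b c \<and> v \<in> {a, b, c}}"

definition ladder_adj :: "rat option \<Rightarrow> rat option \<Rightarrow> rat option \<Rightarrow> rat option \<Rightarrow> bool" where
  "ladder_adj x y u v = (u \<noteq> v \<and> (\<exists>a b c. ladder_tri x y a b c \<and> u \<in> {a, b, c} \<and> v \<in> {a, b, c}))"

end

theory Submission
  imports Defs
begin

text \<open>
  The ladder graph is a subgraph of the Farey graph, so it suffices that every Farey geodesic
  from \<open>x\<close> to \<open>y\<close> runs inside the ladder. Which side of the geodesic line through a Farey edge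
  \<open>c d\<close> a vertex \<open>w\<close> lies on is the sign of \<open>det(c, w) det(d, w)\<close>. Farey edges never cross, so a
  geodesic whose endpoints lie in a closed half-plane bounded by a Farey edge stays in it: otherwise
  it would meet that edge twice and could be shortened. Hence every edge \<open>a b\<close> of a geodesic
  either crosses the line \<open>x y\<close> or one of the two Farey triangles on it has its third vertex
  across that line; either way some Farey triangle containing \<open>a b\<close> has vertices on both sides
  of \<open>x y\<close>, so its interior meets the geodesic from \<open>x\<close> to \<open>y\<close> and it belongs to the ladder.
  This last, hyperbolic, step uses that points of the upper half-plane are, up to scaling, the
  positive definite binary quadratic forms.
\<close>

section \<open>Farey coordinates\<close>

definition idet :: "int \<times> int \<Rightarrow> int \<times> int \<Rightarrow> int" where
  "idet u v = fst u * snd v - snd u * fst v"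

lemma idet_self [simp]: "idet u u = 0"
  by (simp add: idet_def)

lemma idet_swap: "idet u v = - idet v u"
  by (simp add: idet_def)

lemma frac_None [simp]: "frac None = (1, 0)"
  and frac_Some [simp]: "frac (Some a) = quotient_of a"
  by (simp_all add: frac_def)

lemma idet_frac_eq_0_iff: "idet (frac u) (frac v) = 0 \<longleftrightarrow> u = v"
proof
  assume det: "idet (frac u) (frac v) = 0"
  show "u = v"
  proof (cases u; cases v)
    fix a b assume ab: "u = Some a" "v = Some b"
    obtain p q r s where pq: "quotient_of a = (p, q)" and rs: "quotient_of b = (r, s)"
      by (meson surj_pair)
    have "p * s = q * r" using det ab pq rs by (simp add: idet_def)
    hence "(of_int p / of_int q :: rat) = of_int r / of_int s"
      using quotient_of_denom_pos[OF pq] quotient_of_denom_pos[OF rs]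
      by (simp add: field_simps flip: of_int_mult)
    then show "u = v" using ab quotient_of_div[OF pq] quotient_of_div[OF rs] by simp
  qed (use det in \<open>auto simp: idet_def quotient_of_denom_pos'[THEN less_imp_neq, THEN not_sym]\<close>)
qed simp

lemma farey_adj_iff: "farey_adj u v \<longleftrightarrow> \<bar>idet (frac u) (frac v)\<bar> = 1"
  by (simp add: farey_adj_def idet_def split: prod.splits)

lemma farey_adj_sym: "farey_adj u v \<Longrightarrow> farey_adj v u"
  by (simp add: farey_adj_iff idet_swap[of "frac v"])

lemma farey_adj_irrefl: "\<not> farey_adj u u"
  by (simp add: farey_adj_iff)

lemma vertex_of_coprime:
  assumes "coprime m n"
  shows "\<exists>v. frac v = (m, n) \<or> frac v = (- m, - n)"
proof (cases n "0 :: int" rule: linorder_cases)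
  case less
  then show ?thesis
    using assms by (intro exI[of _ "Some (Fract (- m) (- n))"]) (simp add: quotient_of_Fract)
next
  case equal
  then show ?thesis
    using assms by (intro exI[of _ None]) (auto simp: zmult_eq_1_iff)
next
  case greater
  then show ?thesis
    using assms by (intro exI[of _ "Some (Fract m n)"]) (simp add: quotient_of_Fract)
qed

text \<open>The identity on \<open>idet\<close> says \<open>frac v = e * (frac a + t * frac b)\<close>; for \<open>t = \<pm>1\<close>
  these are the third vertices of the two Farey triangles on the edge \<open>a b\<close>.\<close>
lemma farey_third_vertex:
  assumes ab: "farey_adj a b" and t: "\<bar>t\<bar> = 1"
  shows "\<exists>v e. \<bar>e\<bar> = 1 \<and> farey_adj a v \<and> farey_adj b v \<and>
           (\<forall>w. idet (frac v) w = e * (idet (frac a) w + t * idet (frac b) w))"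
proof -
  obtain a1 a2 b1 b2 where a: "frac a = (a1, a2)" and b: "frac b = (b1, b2)"
    by (meson surj_pair)
  have d: "\<bar>a1 * b2 - a2 * b1\<bar> = 1"
    using ab a b by (simp add: farey_adj_iff idet_def)
  have "coprime (a1 + t * b1) (a2 + t * b2)"
  proof (rule coprimeI)
    fix g assume "g dvd a1 + t * b1" "g dvd a2 + t * b2"
    hence "g dvd (a1 + t * b1) * b2 - (a2 + t * b2) * b1" by simp
    also have "(a1 + t * b1) * b2 - (a2 + t * b2) * b1 = a1 * b2 - a2 * b1"
      by (simp add: algebra_simps)
    finally show "is_unit g" using d by (metis dvd_abs_iff)
  qed
  then obtain v e where v: "frac v = (e * (a1 + t * b1), e * (a2 + t * b2))" and e: "\<bar>e\<bar> = 1"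
    using vertex_of_coprime by (metis abs_1 abs_neg_one mult_1 mult_minus1)
  have "idet (frac a) (frac v) = e * t * idet (frac a) (frac b)"
    and "idet (frac b) (frac v) = - e * idet (frac a) (frac b)"
    using a b v by (simp_all add: idet_def algebra_simps)
  hence "farey_adj a v" "farey_adj b v"
    using ab e t by (simp_all add: farey_adj_iff abs_mult)
  with v e a b show ?thesis by (intro exI[of _ v] exI[of _ e]) (auto simp: idet_def algebra_simps)
qed

text \<open>Up to a nonzero factor depending only on \<open>c\<close> and \<open>d\<close>, \<open>edge_side c d w\<close> is \<open>side_bd\<close>: its sign
  tells on which side of the hyperbolic geodesic from \<open>c\<close> to \<open>d\<close> the boundary point \<open>w\<close> lies.\<close>
definition edge_side :: "rat option \<Rightarrow> rat option \<Rightarrow> rat option \<Rightarrow> int" where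
  "edge_side c d w = idet (frac c) (frac w) * idet (frac d) (frac w)"

lemma edge_side_eq_0_iff: "edge_side c d w = 0 \<longleftrightarrow> w = c \<or> w = d"
  using idet_frac_eq_0_iff by (auto simp: edge_side_def)

lemma farey_edges_noncrossing:
  assumes "farey_adj c d" "farey_adj a b"
  shows "\<not> edge_side c d a * edge_side c d b < 0"
proof
  assume neg: "edge_side c d a * edge_side c d b < 0"
  define ca where "ca = idet (frac c) (frac a)"
  define cb where "cb = idet (frac c) (frac b)"
  define da where "da = idet (frac d) (frac a)"
  define db where "db = idet (frac d) (frac b)"
  \<comment> \<open>Pluecker relation for the four determinants\<close>
  have "idet (frac c) (frac d) * idet (frac a) (frac b) = ca * db - cb * da"
    by (simp add: idet_def ca_def cb_def da_def db_def algebra_simps)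
  hence one: "\<bar>ca * db - cb * da\<bar> = 1"
    using assms by (metis abs_mult farey_adj_iff mult_1)
  have "(ca * db) * (cb * da) < 0"
    using neg by (simp add: edge_side_def ca_def cb_def da_def db_def algebra_simps)
  moreover have "P * Q < 0 \<Longrightarrow> \<bar>P - Q\<bar> \<noteq> 1" for P Q :: int
    by (auto simp: mult_less_0_iff)
  ultimately show False
    using one by blast
qed

section \<open>Geodesics in graphs\<close>

lemma is_path_iff_successively:
  "is_path E P x y \<longleftrightarrow> P \<noteq> [] \<and> hd P = x \<and> last P = y \<and> successively E P"
  by (simp add: is_path_def successively_conv_nth)

lemma gdist_le_path_length: "is_path E P x y \<Longrightarrow> gdist E x y \<le> enat (length P - 1)"
  unfolding gdist_def by (rule INF_lower) simp

lemma geodesic_exists: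
  assumes "is_path E P x y"
  shows "\<exists>Q. is_geodesic E Q x y"
proof -
  let ?L = "(\<lambda>Q. enat (length Q - 1)) ` {Q. is_path E Q x y}"
  have "Inf ?L \<in> ?L"
    using assms unfolding Inf_enat_def by (auto intro: LeastI)
  then show ?thesis
    by (auto simp: is_geodesic_def gdist_def)
qed

lemma gdist_mono:
  assumes "\<And>u v. E' u v \<Longrightarrow> E u v"
  shows "gdist E x y \<le> gdist E' x y"
  unfolding gdist_def
  by (rule INF_mono) (use assms in \<open>auto simp: is_path_def\<close>)

lemma geodesic_subgraph_iff:
  assumes sub: "\<And>u v. E' u v \<Longrightarrow> E u v"
    and geo: "\<And>Q. is_geodesic E Q x y \<Longrightarrow> is_path E' Q x y"
    and P: "is_path E P x y"
  shows "is_geodesic E P x y \<longleftrightarrow> is_geodesic E' P x y"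
proof -
  obtain Q where Q: "is_geodesic E Q x y"
    using geodesic_exists[OF P] by blast
  have "gdist E' x y \<le> gdist E x y"
    using gdist_le_path_length[OF geo[OF Q]] Q by (simp add: is_geodesic_def)
  with gdist_mono[OF sub] have "gdist E' x y = gdist E x y"
    by (rule antisym[rotated])
  then show ?thesis
    using P geo by (auto simp: is_geodesic_def)
qed

lemma geodesic_no_shortcut:
  assumes geo: "is_geodesic E (xs @ u # ms @ v # ys) x y" and "ms \<noteq> []"
  shows "u \<noteq> v \<and> \<not> E u v"
proof -
  let ?P = "xs @ u # ms @ v # ys"
  have P: "is_path E ?P x y" and len: "gdist E x y = enat (length ?P - 1)"
    using geo by (auto simp: is_geodesic_def)
  have shorter: "\<not> is_path E Q x y" if "length Q < length ?P" for Q
    using gdist_le_path_length[of E Q x y] that len by fastforce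
  have "\<not> is_path E (xs @ u # ys) x y" "\<not> is_path E (xs @ u # v # ys) x y"
    using \<open>ms \<noteq> []\<close> by (auto intro!: shorter)
  moreover have "successively E (v # ys)"
    using P successively_append_iff[of E "xs @ u # ms" "v # ys"] by (simp add: is_path_iff_successively)
  ultimately show ?thesis
    using P by (auto simp: is_path_iff_successively successively_append_iff hd_append
        split: if_splits)
qed

lemma successively_sign_change:
  fixes f :: "'a \<Rightarrow> 'b::linordered_idom"
  assumes "successively (\<lambda>u v. \<not> f u * f v < 0) (xs @ [w])"
    and "xs \<noteq> []" "f (hd xs) \<le> 0" "f w > 0"
  shows "\<exists>z\<in>set xs. f z = 0"
  using assms
proof (induction xs)
  case (Cons a xs)
  show ?case
  proof (cases "f a = 0 \<or> xs = []")
    case True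
    then show ?thesis
      using Cons.prems by (auto simp: mult_less_0_iff)
  next
    case False
    hence "f (hd xs) \<le> 0"
      using Cons.prems by (cases xs) (auto simp: mult_less_0_iff)
    with False Cons.IH Cons.prems show ?thesis
      by (cases xs) auto
  qed
qed simp

text \<open>A geodesic cannot leave a half-space bounded by an edge \<open>c d\<close>: it would have to
  cross the boundary twice, and those crossings are both endpoints of that edge.\<close>
lemma geodesic_stays_in_halfspace:
  fixes f :: "'a \<Rightarrow> 'b::linordered_idom"
  assumes geo: "is_geodesic E P x y"
    and cross: "\<And>u v. E u v \<Longrightarrow> \<not> f u * f v < 0"
    and zeros: "\<And>v. f v = 0 \<Longrightarrow> v = c \<or> v = d"
    and cd: "E c d" "E d c"
    and fx: "f x \<le> 0" and fy: "f y \<le> 0"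
    and v: "v \<in> set P"
  shows "f v \<le> 0"
proof (rule ccontr)
  assume "\<not> f v \<le> 0"
  then have fv: "f v > 0" by simp
  obtain as bs where P: "P = as @ v # bs"
    using split_list[OF v] by blast
  have path: "P \<noteq> []" "hd P = x" "last P = y" "successively (\<lambda>u v. \<not> f u * f v < 0) P"
    using geo cross by (auto simp: is_geodesic_def is_path_iff_successively
        elim: successively_mono)
  have "as \<noteq> []" "bs \<noteq> []"
    using path fx fy fv P by auto
  have "successively (\<lambda>u v. \<not> f u * f v < 0) (as @ [v])"
    and "successively (\<lambda>u v. \<not> f u * f v < 0) (rev bs @ [v])"
    using path(4) unfolding P
    by (auto simp: successively_append_iff successively_Cons last_rev mult.commute)
  then obtain z1 z2 where "z1 \<in> set as" "z2 \<in> set bs" "f z1 = 0" "f z2 = 0"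
    using successively_sign_change[of f as v] successively_sign_change[of f "rev bs" v]
      \<open>as \<noteq> []\<close> \<open>bs \<noteq> []\<close> path fv fx fy unfolding P by (auto simp: hd_rev)
  then obtain as1 as2 bs1 bs2 where "P = as1 @ z1 # (as2 @ v # bs1) @ z2 # bs2"
    unfolding P by (metis append.assoc append_Cons split_list)
  from geodesic_no_shortcut[OF geo[unfolded this]] have "z1 \<noteq> z2 \<and> \<not> E z1 z2"
    by simp
  with zeros \<open>f z1 = 0\<close> \<open>f z2 = 0\<close> cd show False
    by metis
qed

lemma successively_set_subset:
  assumes "successively R xs" "\<And>u v. R u v \<Longrightarrow> u \<in> S \<and> v \<in> S" "length xs \<noteq> 1"
  shows "set xs \<subseteq> S"
  using assms by (induction xs rule: induct_list012) (fastforce simp: successively_Cons)+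

section \<open>Geodesics in the Farey graph\<close>

lemma farey_geodesic_stays_on_side:
  assumes geo: "is_geodesic farey_adj P x y" and cd: "farey_adj c d"
    and "s * edge_side c d x \<le> 0" "s * edge_side c d y \<le> 0" and "v \<in> set P"
  shows "s * edge_side c d v \<le> 0"
proof (cases "s = 0")
  case False
  have noncross: "\<not> (s * edge_side c d u) * (s * edge_side c d w) < 0" if "farey_adj u w" for u w
  proof -
    have "(s * edge_side c d u) * (s * edge_side c d w) = (s * s) * (edge_side c d u * edge_side c d w)"
      by (simp add: algebra_simps)
    then show ?thesis
      using farey_edges_noncrossing[OF cd that] by (metis mult_nonneg_nonneg not_less zero_le_square)
  qed
  have zeros: "s * edge_side c d w = 0 \<Longrightarrow> w = c \<or> w = d" for w
    using False by (simp add: edge_side_eq_0_iff)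
  show ?thesis
    by (rule geodesic_stays_in_halfspace[where f = "\<lambda>w. s * edge_side c d w",
          OF geo noncross zeros cd farey_adj_sym[OF cd] assms(3-5)])
qed simp

text \<open>If \<open>p\<close> is the third vertex of a Farey triangle on a geodesic edge \<open>a b\<close>, then \<open>x\<close> and \<open>y\<close>
  cannot both lie beyond the outer edge \<open>p b\<close> (away from \<open>a\<close>), nor both beyond \<open>a p\<close>.\<close>
lemma geodesic_outer_edges:
  assumes geo: "is_geodesic farey_adj P x y" and ab: "farey_adj a b"
    and aP: "a \<in> set P" and bP: "b \<in> set P"
    and p: "farey_adj a p" "farey_adj b p" and e: "\<bar>e\<bar> = 1" and t: "\<bar>t\<bar> = 1"
    and p_det: "\<And>w. idet (frac p) w = e * (idet (frac a) w + t * idet (frac b) w)"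
  defines "A w \<equiv> idet (frac a) (frac w)" and "B w \<equiv> idet (frac b) (frac w)"
  shows "\<not> (t * ((A x + t * B x) * B x) \<le> 0 \<and> t * ((A y + t * B y) * B y) \<le> 0)"
    and "\<not> (A x * (A x + t * B x) \<le> 0 \<and> A y * (A y + t * B y) \<le> 0)"
proof -
  have et: "e = 1 \<or> e = -1" "t = 1 \<or> t = -1"
    using e t by linarith+
  have d: "idet (frac a) (frac b) * idet (frac a) (frac b) = 1"
    using ab unfolding farey_adj_iff by (metis abs_mult_self_eq mult_1)
  have A_B: "A a = 0" "B a = - idet (frac a) (frac b)" "A b = idet (frac a) (frac b)" "B b = 0"
    by (simp_all add: A_def B_def idet_swap[of "frac b"])
  have "e * t * edge_side p b w = t * ((A w + t * B w) * B w)"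
    and "e * edge_side a p w = A w * (A w + t * B w)" for w
    using et by (auto simp: edge_side_def p_det A_def B_def algebra_simps)
  moreover have "e * t * edge_side p b a > 0" "e * edge_side a p b > 0"
    unfolding calculation A_B using et d by (auto simp: algebra_simps)
  ultimately show "\<not> (t * ((A x + t * B x) * B x) \<le> 0 \<and> t * ((A y + t * B y) * B y) \<le> 0)"
    and "\<not> (A x * (A x + t * B x) \<le> 0 \<and> A y * (A y + t * B y) \<le> 0)"
    using farey_geodesic_stays_on_side[OF geo farey_adj_sym[OF p(2)], of "e * t" a]
      farey_geodesic_stays_on_side[OF geo p(1), of e b] aP bP
    by (metis not_le)+
qed

lemma quadrilateral_sign_cases:
  fixes Xa Ya Xb Yb :: int
  assumes "Xa * Ya \<noteq> 0" "(Xa * Ya) * (Xb * Yb) \<ge> 0"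
    "(Xa * Ya) * ((Xa + Xb) * (Ya + Yb)) \<ge> 0" "(Xa * Ya) * ((Xa - Xb) * (Ya - Yb)) \<ge> 0"
  shows "(Xa + Xb) * Xb \<le> 0 \<and> (Ya + Yb) * Yb \<le> 0 \<or> Xa * (Xa + Xb) \<le> 0 \<and> Ya * (Ya + Yb) \<le> 0 \<or>
    (Xa - Xb) * Xb \<ge> 0 \<and> (Ya - Yb) * Yb \<ge> 0 \<or> Xa * (Xa - Xb) \<le> 0 \<and> Ya * (Ya - Yb) \<le> 0"
  using assms by (auto simp: zero_le_mult_iff mult_le_0_iff)

text \<open>Around a geodesic edge \<open>a b\<close> not crossing the line \<open>x y\<close>, one of the two third
  vertices \<open>\<pm>(a \<pm> b)\<close> lies strictly across that line: otherwise \<open>x\<close> and \<open>y\<close> would both lie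
  beyond one of the four outer edges of the two triangles on \<open>a b\<close>.\<close>
lemma geodesic_edge_opposite_neighbour:
  assumes geo: "is_geodesic farey_adj P x y" and ab: "farey_adj a b"
    and aP: "a \<in> set P" and bP: "b \<in> set P"
    and a_off: "edge_side x y a \<noteq> 0" and same: "edge_side x y a * edge_side x y b \<ge> 0"
  shows "\<exists>m. farey_adj a m \<and> farey_adj b m \<and> edge_side x y a * edge_side x y m < 0"
proof (rule ccontr)
  assume none: "\<not> ?thesis"
  obtain p e where p: "farey_adj a p" "farey_adj b p" "\<bar>e\<bar> = 1"
    and p_det: "\<And>w. idet (frac p) w = e * (idet (frac a) w + 1 * idet (frac b) w)"
    using farey_third_vertex[OF ab, of 1] by auto
  obtain q f where q: "farey_adj a q" "farey_adj b q" "\<bar>f\<bar> = 1"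
    and q_det: "\<And>w. idet (frac q) w = f * (idet (frac a) w + - 1 * idet (frac b) w)"
    using farey_third_vertex[OF ab, of "-1"] by auto
  define Xa where "Xa = idet (frac a) (frac x)"
  define Xb where "Xb = idet (frac b) (frac x)"
  define Ya where "Ya = idet (frac a) (frac y)"
  define Yb where "Yb = idet (frac b) (frac y)"
  have side_xy: "edge_side x y w = idet (frac w) (frac x) * idet (frac w) (frac y)" for w
    by (simp add: edge_side_def idet_swap[of "frac x"] idet_swap[of "frac y"])
  have "edge_side x y a * edge_side x y p \<ge> 0" "edge_side x y a * edge_side x y q \<ge> 0"
    using none p(1,2) q(1,2) by (auto simp: not_less)
  moreover have "e = 1 \<or> e = -1" "f = 1 \<or> f = -1"
    using p(3) q(3) by linarith+
  ultimately have "(Xa * Ya) * ((Xa + Xb) * (Ya + Yb)) \<ge> 0" "(Xa * Ya) * ((Xa - Xb) * (Ya - Yb)) \<ge> 0"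
    unfolding side_xy p_det q_det Xa_def Xb_def Ya_def Yb_def by (auto simp: algebra_simps)
  moreover have "Xa * Ya \<noteq> 0" "(Xa * Ya) * (Xb * Yb) \<ge> 0"
    using a_off same unfolding side_xy Xa_def Xb_def Ya_def Yb_def by simp_all
  ultimately show False
    using quadrilateral_sign_cases[of Xa Ya Xb Yb]
      geodesic_outer_edges[OF geo ab aP bP p(1,2,3) _ p_det]
      geodesic_outer_edges[OF geo ab aP bP q(1,2,3) _ q_det]
    unfolding Xa_def Xb_def Ya_def Yb_def by auto
qed

section \<open>Farey triangles crossing the geodesic\<close>

definition rdet :: "real \<times> real \<Rightarrow> real \<times> real \<Rightarrow> real" where
  "rdet u w = fst u * snd w - snd u * fst w"

text \<open>For \<open>Im z > 0\<close>, \<open>hform z u v = Re ((u\<^sub>1 - u\<^sub>2 z) * cnj (v\<^sub>1 - v\<^sub>2 z))\<close> is a positive definite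
  bilinear form on homogeneous coordinates of boundary points.\<close>
definition hform :: "complex \<Rightarrow> real \<times> real \<Rightarrow> real \<times> real \<Rightarrow> real" where
  "hform z u v = (fst u - snd u * Re z) * (fst v - snd v * Re z) + snd u * snd v * (Im z)\<^sup>2"

definition bside :: "real \<times> real \<Rightarrow> real \<times> real \<Rightarrow> real \<times> real \<Rightarrow> real" where
  "bside u v w = rdet u w * rdet v w"

text \<open>Homogeneous coordinates of a boundary point; \<open>\<infinity>\<close> gets \<open>(-1, 0)\<close> rather than \<open>(1, 0)\<close>
  so that \<open>side_pt\<close> and \<open>side_bd\<close> become exactly \<open>hform\<close> and \<open>bside\<close>.\<close>
definition bvec :: "real option \<Rightarrow> real \<times> real" where
  "bvec w = (case w of None \<Rightarrow> (-1, 0) | Some a \<Rightarrow> (a, 1))"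

lemma side_pt_eq_hform:
  "u \<noteq> None \<or> v \<noteq> None \<Longrightarrow> side_pt u v z = hform z (bvec u) (bvec v)"
  by (cases u; cases v) (simp_all add: side_pt_def hform_def bvec_def cmod_power2,
      simp_all add: power2_eq_square field_simps)

lemma side_bd_eq_bside:
  "u \<noteq> None \<or> v \<noteq> None \<Longrightarrow> side_bd u v w = bside (bvec u) (bvec v) (bvec w)"
  by (cases u; cases v; cases w) (auto simp: side_bd_def bside_def rdet_def bvec_def algebra_simps)

lemma hgeod_if_side_pt_eq_0:
  assumes "u \<noteq> None \<or> v \<noteq> None" "Im z > 0" "side_pt u v z = 0"
  shows "z \<in> hgeod u v"
proof (cases "u \<noteq> None \<and> v \<noteq> None")
  case True
  then obtain a b where ab: "u = Some a" "v = Some b" by auto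
  then have "(cmod (z - of_real ((a + b) / 2)))\<^sup>2 = (\<bar>a - b\<bar> / 2)\<^sup>2"
    using assms(3) by (simp add: side_pt_def power_divide)
  then have "cmod (z - of_real ((a + b) / 2)) = \<bar>a - b\<bar> / 2"
    by (simp add: power2_eq_iff_nonneg)
  then show ?thesis
    using ab assms(2) by (simp add: hgeod_def)
qed (use assms in \<open>auto simp: hgeod_def side_pt_def\<close>)

lemma hform_represents_posdef_form:
  fixes s11 s12 s22 :: real
  assumes "0 < s11" "s12\<^sup>2 < s11 * s22"
  shows "\<exists>z. 0 < Im z \<and> (\<forall>u v. s11 * hform z u v =
           s11 * fst u * fst v + s12 * (fst u * snd v + snd u * fst v) + s22 * snd u * snd v)"
proof -
  define z where "z = Complex (- s12 / s11) (sqrt (s11 * s22 - s12\<^sup>2) / s11)"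
  have "0 < Im z"
    using assms by (simp add: z_def)
  moreover have "(Im z)\<^sup>2 = (s11 * s22 - s12\<^sup>2) / s11\<^sup>2"
    using assms by (simp add: z_def power_divide)
  ultimately show ?thesis
    using assms(1)
    by (intro exI[of _ z]) (simp add: hform_def z_def field_simps power2_eq_square)
qed

lemma posdef_gram_with_signs:
  fixes \<alpha> \<beta> \<gamma> e M N :: real
  assumes "\<alpha> * \<beta> < 0" "e \<noteq> 0" "0 < M" "0 < N"
  shows "\<exists>p q r. 0 < p \<and> r\<^sup>2 < p * q \<and> e * r < 0 \<and> 0 < M * p + e * r \<and> 0 < N * q + e * r \<and>
           \<alpha> * p + \<gamma> * r + \<beta> * q = 0"
proof -
  \<comment> \<open>\<open>p = \<bar>\<beta>\<bar>, q = \<bar>\<alpha>\<bar>, r = 0\<close> solves the equation with all inequalities but \<open>e * r < 0\<close>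
    strict; perturb \<open>r\<close> to \<open>-e * t\<close> for small \<open>t > 0\<close> and correct \<open>p\<close> accordingly.\<close>
  define p where "p t = \<bar>\<beta>\<bar> + e * \<gamma> / \<alpha> * t" for t
  have \<alpha>: "\<alpha> \<noteq> 0" and \<beta>: "\<beta> \<noteq> 0"
    using assms(1) by auto
  have lim_p: "(p \<longlongrightarrow> \<bar>\<beta>\<bar>) (at_right 0)"
    unfolding p_def by (intro tendsto_eq_intros) auto
  have "\<forall>\<^sub>F t in at_right (0 :: real). 0 < t"
    by (rule eventually_at_right_less)
  moreover have "\<forall>\<^sub>F t in at_right 0. 0 < p t"
    using order_tendstoD(1)[OF lim_p] \<beta> by simp
  moreover have "\<forall>\<^sub>F t in at_right 0. 0 < p t * \<bar>\<alpha>\<bar> - (e * t)\<^sup>2"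
    by (rule order_tendstoD(1)[of _ "\<bar>\<beta>\<bar> * \<bar>\<alpha>\<bar>"])
       (use \<alpha> \<beta> in \<open>auto intro!: tendsto_eq_intros lim_p\<close>)
  moreover have "\<forall>\<^sub>F t in at_right 0. 0 < M * p t - e * e * t"
    by (rule order_tendstoD(1)[of _ "M * \<bar>\<beta>\<bar>"])
       (use assms(3) \<beta> in \<open>auto intro!: tendsto_eq_intros lim_p\<close>)
  moreover have "\<forall>\<^sub>F t in at_right 0. 0 < N * \<bar>\<alpha>\<bar> - e * e * t"
    by (rule order_tendstoD(1)[of _ "N * \<bar>\<alpha>\<bar>"])
       (use assms(4) \<alpha> in \<open>auto intro!: tendsto_eq_intros\<close>)
  ultimately have "\<forall>\<^sub>F t in at_right 0. 0 < t \<and> 0 < p t \<and> 0 < p t * \<bar>\<alpha>\<bar> - (e * t)\<^sup>2 \<and>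
      0 < M * p t - e * e * t \<and> 0 < N * \<bar>\<alpha>\<bar> - e * e * t"
    by eventually_elim blast
  from eventually_happens'[OF trivial_limit_at_right_real this]
  obtain t where t: "0 < t" "0 < p t" "0 < p t * \<bar>\<alpha>\<bar> - (e * t)\<^sup>2"
    "0 < M * p t - e * e * t" "0 < N * \<bar>\<alpha>\<bar> - e * e * t"
    by blast
  have "\<alpha> * \<bar>\<beta>\<bar> + \<beta> * \<bar>\<alpha>\<bar> = 0"
    using assms(1) by (auto simp: mult_less_0_iff)
  then have "\<alpha> * p t + \<gamma> * (- e * t) + \<beta> * \<bar>\<alpha>\<bar> = 0"
    using \<alpha> by (simp add: p_def field_simps)
  moreover have "e * (- e * t) < 0"
    using assms(2) t(1) by (auto simp: zero_less_mult_iff mult_less_0_iff linorder_neq_iff)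
  ultimately show ?thesis
    using t by (intro exI[of _ "p t"] exI[of _ "\<bar>\<alpha>\<bar>"] exI[of _ "- e * t"]) (simp add: power2_eq_square)
qed

lemma hform_represents_form_in_basis:
  fixes A B :: "real \<times> real" and p q r :: real
  assumes AB: "rdet A B \<noteq> 0" and p: "0 < p" and pq: "r\<^sup>2 < p * q"
  defines "G u v \<equiv> p * rdet u B * rdet v B + r * (rdet u B * rdet A v + rdet A u * rdet v B) +
                    q * rdet A u * rdet A v"
  shows "\<exists>z s. 0 < Im z \<and> 0 < s \<and> (\<forall>u v. hform z u v = G u v / s)"
proof -
  define s11 where "s11 = G (1, 0) (1, 0)"
  define s12 where "s12 = G (1, 0) (0, 1)"
  define s22 where "s22 = G (0, 1) (0, 1)"
  have G_expand: "G u v = s11 * fst u * fst v + s12 * (fst u * snd v + snd u * fst v) + s22 * snd u * snd v"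
    for u v
    by (simp add: G_def s11_def s12_def s22_def rdet_def algebra_simps)
  have G_nonneg: "0 \<le> G u u" for u
  proof -
    have "p * G u u = (p * rdet u B + r * rdet A u)\<^sup>2 + (p * q - r\<^sup>2) * (rdet A u)\<^sup>2"
      by (simp add: G_def power2_eq_square algebra_simps)
    also have "\<dots> \<ge> 0"
      using pq by simp
    finally show ?thesis
      using p by (simp add: zero_le_mult_iff)
  qed
  have "s11 * s22 - s12\<^sup>2 = (p * q - r\<^sup>2) * (rdet A B)\<^sup>2"
    by (simp add: s11_def s12_def s22_def G_def rdet_def power2_eq_square algebra_simps)
  moreover have "0 < (p * q - r\<^sup>2) * (rdet A B)\<^sup>2"
    using pq AB by simp
  ultimately have det: "s12\<^sup>2 < s11 * s22"
    by linarith
  with G_nonneg have "0 < s11"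
    unfolding s11_def by (metis less_eq_real_def mult_eq_0_iff zero_le_power2 not_le)
  then show ?thesis
    using hform_represents_posdef_form[OF _ det] G_expand
    by (metis (no_types, lifting) nonzero_mult_div_cancel_left less_irrefl)
qed

text \<open>Points of the upper half-plane correspond, up to positive scaling, to positive definite
  binary forms (\<open>hform_represents_posdef_form\<close>). A point lies on the geodesic \<open>X Y\<close> iff its
  form makes \<open>X\<close> and \<open>Y\<close> orthogonal, and on the \<open>C\<close>-side of the geodesic \<open>A B\<close> iff the sign of
  its form on \<open>(A, B)\<close> is right; so it suffices to write down a suitable Gram matrix in
  the basis \<open>A, B\<close>.\<close>
lemma ideal_triangle_meets_geodesic:
  fixes A B C X Y :: "real \<times> real"
  assumes AB: "rdet A B \<noteq> 0" and BC: "rdet B C \<noteq> 0" and CA: "rdet C A \<noteq> 0"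
    and sep: "(rdet X A * rdet Y A) * (rdet X B * rdet Y B) < 0"
  shows "\<exists>z. 0 < Im z \<and> hform z X Y = 0 \<and> 0 < hform z A B * bside A B C \<and>
           0 < hform z B C * bside B C A \<and> 0 < hform z C A * bside C A B"
proof -
  define c1 where "c1 u = rdet u B" for u
  define c2 where "c2 u = rdet A u" for u
  define m where "m = c1 C"
  define n where "n = c2 C"
  have "m \<noteq> 0" "n \<noteq> 0"
    using BC CA by (auto simp: m_def n_def c1_def c2_def rdet_def algebra_simps)
  moreover have "(c1 X * c1 Y) * (c2 X * c2 Y) < 0"
    using sep by (simp add: c1_def c2_def rdet_def algebra_simps)
  ultimately obtain p q r where pqr: "0 < p" "r\<^sup>2 < p * q" "m * n * r < 0"
    "0 < m\<^sup>2 * p + m * n * r" "0 < n\<^sup>2 * q + m * n * r"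
    "(c1 X * c1 Y) * p + (c1 X * c2 Y + c2 X * c1 Y) * r + (c2 X * c2 Y) * q = 0"
    using posdef_gram_with_signs[of "c1 X * c1 Y" "c2 X * c2 Y" "m * n" "m\<^sup>2" "n\<^sup>2"
        "c1 X * c2 Y + c2 X * c1 Y"] by auto
  define G where "G u v = p * c1 u * c1 v + r * (c1 u * c2 v + c2 u * c1 v) + q * c2 u * c2 v" for u v
  obtain z s where z: "0 < Im z" "0 < s" and hform_G: "\<And>u v. hform z u v = G u v / s"
    using hform_represents_form_in_basis[OF AB pqr(1,2)] unfolding G_def c1_def c2_def by blast
  have coords: "c1 A = rdet A B" "c2 A = 0" "c1 B = 0" "c2 B = rdet A B"
    and dets: "rdet A C = n" "rdet B C = - m" "rdet C A = - n" "rdet B A = - rdet A B" "rdet C B = m"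
    by (simp_all add: c1_def c2_def m_def n_def rdet_def)
  define w where "w = (rdet A B)\<^sup>2 / s"
  have "0 < w"
    using z(2) AB by (simp add: w_def)
  moreover have "hform z A B * bside A B C = - (m * n * r) * w"
    "hform z B C * bside B C A = (n\<^sup>2 * q + m * n * r) * w"
    "hform z C A * bside C A B = (m\<^sup>2 * p + m * n * r) * w"
    by (simp_all add: w_def hform_G G_def bside_def coords dets m_def[symmetric] n_def[symmetric]
        power2_eq_square algebra_simps add_divide_distrib)
  moreover have "hform z X Y = 0"
    using pqr(6) by (simp add: hform_G G_def algebra_simps)
  ultimately show ?thesis
    using z pqr(3-5) by (intro exI[of _ z]) (simp add: mult_pos_pos mult_neg_pos)
qed

lemma frac_scaled_bvec:
  "\<exists>k. k \<noteq> 0 \<and> real_of_int (fst (frac v)) = k * fst (bvec (bdry v)) \<and>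
         real_of_int (snd (frac v)) = k * snd (bvec (bdry v))"
proof (cases v)
  case (Some a)
  obtain p q where pq: "quotient_of a = (p, q)"
    by (meson surj_pair)
  have "real_of_rat a = of_int p / of_int q"
    by (simp add: quotient_of_div[OF pq] of_rat_divide)
  then show ?thesis
    using Some pq quotient_of_denom_pos[OF pq]
    by (intro exI[of _ "real_of_int q"]) (simp add: bdry_def bvec_def)
qed (auto simp: bdry_def bvec_def)

lemma ladder_tri_if_separated:
  assumes tri: "farey_triangle a b c" and sep: "edge_side x y a * edge_side x y b < 0"
  shows "ladder_tri x y a b c"
proof -
  define V where "V v = bvec (bdry v)" for v
  obtain k where k: "\<And>v. k v \<noteq> 0 \<and> real_of_int (fst (frac v)) = k v * fst (V v) \<and>
      real_of_int (snd (frac v)) = k v * snd (V v)"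
    using frac_scaled_bvec unfolding V_def by metis
  have idet_rdet: "real_of_int (idet (frac u) (frac w)) = k u * k w * rdet (V u) (V w)" for u w
    using k[of u] k[of w] by (simp add: idet_def rdet_def algebra_simps)
  have nondeg: "rdet (V u) (V w) \<noteq> 0" "bdry u \<noteq> None \<or> bdry w \<noteq> None" if "farey_adj u w" for u w
  proof -
    have "u \<noteq> w"
      using that farey_adj_irrefl by blast
    then have "real_of_int (idet (frac u) (frac w)) \<noteq> 0"
      using idet_frac_eq_0_iff by simp
    then show "rdet (V u) (V w) \<noteq> 0"
      by (simp add: idet_rdet)
    show "bdry u \<noteq> None \<or> bdry w \<noteq> None"
      using \<open>u \<noteq> w\<close> by (auto simp: bdry_def)
  qed
  have ab: "farey_adj a b" and bc: "farey_adj b c" and ca: "farey_adj c a"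
    using tri by (auto simp: farey_triangle_def)
  have "(k x * k y * k a * k b)\<^sup>2 *
      ((rdet (V x) (V a) * rdet (V y) (V a)) * (rdet (V x) (V b) * rdet (V y) (V b)))
      = real_of_int (edge_side x y a * edge_side x y b)"
    by (simp add: edge_side_def idet_rdet power2_eq_square algebra_simps)
  also have "\<dots> < 0"
    using sep by (simp only: of_int_less_0_iff)
  finally have "(rdet (V x) (V a) * rdet (V y) (V a)) * (rdet (V x) (V b) * rdet (V y) (V b)) < 0"
    using k by (simp add: mult_less_0_iff[of "_\<^sup>2"])
  then obtain z where z: "0 < Im z" "hform z (V x) (V y) = 0"
    "0 < hform z (V a) (V b) * bside (V a) (V b) (V c)"
    "0 < hform z (V b) (V c) * bside (V b) (V c) (V a)"
    "0 < hform z (V c) (V a) * bside (V c) (V a) (V b)"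
    using ideal_triangle_meets_geodesic nondeg(1)[OF ab] nondeg(1)[OF bc] nondeg(1)[OF ca] by blast
  have "z \<in> tri_interior (bdry a) (bdry b) (bdry c)"
    using z nondeg(2)[OF ab] nondeg(2)[OF bc] nondeg(2)[OF ca]
    by (simp add: tri_interior_def side_pt_eq_hform side_bd_eq_bside V_def)
  moreover have "x \<noteq> y"
    using sep by (auto simp: edge_side_def mult_less_0_iff)
  then have "bdry x \<noteq> None \<or> bdry y \<noteq> None"
    by (auto simp: bdry_def)
  then have "z \<in> hgeod (bdry x) (bdry y)"
    using z(1,2) by (intro hgeod_if_side_pt_eq_0) (simp_all add: side_pt_eq_hform V_def)
  ultimately show ?thesis
    using tri by (auto simp: ladder_tri_def)
qed

section \<open>Geodesics lie in the ladder\<close>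

lemma ladder_adj_imp_farey_adj: "ladder_adj x y u v \<Longrightarrow> farey_adj u v"
  by (auto simp: ladder_adj_def ladder_tri_def farey_triangle_def dest: farey_adj_sym)

lemma farey_dist_ge_2D:
  assumes "farey_dist x y \<ge> 2"
  shows "x \<noteq> y" "\<not> farey_adj x y"
proof -
  have short: "\<not> is_path farey_adj P x y" if "length P \<le> 2" for P
  proof
    assume "is_path farey_adj P x y"
    then have "farey_dist x y \<le> enat (length P - 1)"
      by (rule gdist_le_path_length)
    also have "\<dots> \<le> 1"
      using that by (simp add: one_enat_def)
    finally have "(2 :: enat) \<le> 1"
      using assms by (rule order_trans[rotated])
    then show False
      by simp
  qed
  from short[of "[x]"] show "x \<noteq> y"
    by (auto simp: is_path_def)
  from short[of "[x, y]"] show "\<not> farey_adj x y"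
    by (auto simp: is_path_def less_Suc_eq)
qed

lemma geodesic_edge_in_ladder:
  assumes geo: "is_geodesic farey_adj P x y" and xy: "\<not> farey_adj x y"
    and uw: "farey_adj u w" and uP: "u \<in> set P" and wP: "w \<in> set P"
  shows "ladder_adj x y u w"
proof -
  have one_side: "\<exists>a b c. ladder_tri x y a b c \<and> s \<in> {a, b, c} \<and> t \<in> {a, b, c}"
    if st: "farey_adj s t" "s \<in> set P" "t \<in> set P" "edge_side x y s \<noteq> 0"
      "\<not> edge_side x y s * edge_side x y t < 0" for s t
  proof -
    obtain m where "farey_adj s m" "farey_adj t m" "edge_side x y s * edge_side x y m < 0"
      using geodesic_edge_opposite_neighbour[OF geo st(1-4)] st(5) by (auto simp: not_less)
    then have "ladder_tri x y s m t"
      using st(1) by (intro ladder_tri_if_separated) (auto simp: farey_triangle_def farey_adj_sym)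
    then show ?thesis by blast
  qed
  have "\<exists>a b c. ladder_tri x y a b c \<and> u \<in> {a, b, c} \<and> w \<in> {a, b, c}"
  proof (cases "edge_side x y u * edge_side x y w < 0")
    case True
    obtain m where "farey_adj u m" "farey_adj w m"
      using farey_third_vertex[OF uw, of 1] by auto
    then have "ladder_tri x y u w m"
      using uw True by (intro ladder_tri_if_separated) (auto simp: farey_triangle_def farey_adj_sym)
    then show ?thesis by blast
  next
    case False
    moreover have "edge_side x y u \<noteq> 0 \<or> edge_side x y w \<noteq> 0"
      using uw xy farey_adj_irrefl by (auto simp: edge_side_eq_0_iff dest: farey_adj_sym)
    ultimately show ?thesis
      using one_side[OF uw uP wP] one_side[OF farey_adj_sym[OF uw] wP uP] by (auto simp: mult.commute)
  qed
  then show ?thesis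
    using uw farey_adj_irrefl by (auto simp: ladder_adj_def)
qed

lemma farey_geodesic_is_ladder_path:
  assumes "is_geodesic farey_adj P x y" "\<not> farey_adj x y"
  shows "is_path (ladder_adj x y) P x y"
  using assms geodesic_edge_in_ladder[OF assms]
  by (auto simp: is_geodesic_def is_path_iff_successively elim!: successively_mono)

lemma ladder_path_vertices:
  assumes "is_path (ladder_adj x y) P u v" "u \<noteq> v"
  shows "set P \<subseteq> ladder_vertices x y"
proof (rule successively_set_subset)
  show "successively (ladder_adj x y) P" "length P \<noteq> 1"
    using assms by (auto simp: is_path_iff_successively length_Suc_conv)
qed (auto simp: ladder_adj_def ladder_vertices_def)

theorem mainTheorem3:
  fixes x y :: "rat option" and P :: "rat option list"
  assumes "farey_dist x y \<ge> 2"
    and "is_path farey_adj P x y"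
  shows "is_geodesic farey_adj P x y \<longleftrightarrow>
           (set P \<subseteq> ladder_vertices x y \<and> is_geodesic (ladder_adj x y) P x y)"
proof -
  have xy: "x \<noteq> y" "\<not> farey_adj x y"
    using farey_dist_ge_2D[OF assms(1)] .
  have "is_geodesic farey_adj P x y \<longleftrightarrow> is_geodesic (ladder_adj x y) P x y"
    by (rule geodesic_subgraph_iff[OF ladder_adj_imp_farey_adj
          farey_geodesic_is_ladder_path[OF _ xy(2)] assms(2)])
  moreover have "is_geodesic (ladder_adj x y) P x y \<Longrightarrow> set P \<subseteq> ladder_vertices x y"
    unfolding is_geodesic_def using ladder_path_vertices xy(1) by blast
  ultimately show ?thesis
    by blast
qed

end
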